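(* Let $\epsilon>0$ and $\alpha_f(\sigma):=\sup_{\omega\in\mathbb{R}} f(\sigma+j\omega)$ for $\sigma>\alpha_0$. Then there is a unique $\sigma^*\in(\alpha_0,\infty)$ with $\alpha_f(\sigma^* )=1/\epsilon$, and $\sigma^*=\alpha_\epsilon$, where $\alpha_\epsilon:=\sup\{\Re\lambda:\ \lambda\in\mathbb{C},\ \det F(\lambda)\neq 0,\ f(\lambda)=1/\epsilon\}$ is the pseudospectral abscissa.
   Context: Fix integers $n\ge 1$, $m\ge 0$, matrices $A_0,\dots,A_m\in\mathbb{C}^{n\times n}$, delays $\tau_0=0$ and $\tau_1,\dots,\tau_m\ge 0$, and weights $w_0,\dots,w_m>0$. Define the matrix function $F(\lambda)=\lambda I_n-\sum_{i=0}^m A_i e^{-\lambda\tau_i}$ for $\lambda\in\mathbb{C}$. The characteristic roots are the solutions of $\det F(\lambda)=0$; this set is nonempty, and every right half-plane $\{\Re\lambda\ge c\}$ contains only finitely many of them, so the spectral abscissa $\alpha_0=\sup\{\Re\lambda:\det F(\lambda)=0\}$ is a finite real number attained by some root. Define $w(\lambda)=\sum_{i=0}^m |e^{-\lambda\tau_i}|/w_i$ and, for $\lambda$ not a characteristic root, $f(\lambda)=w(\lambda)\,\sigma_{\max}(F(\lambda)^{-1})$, where $\sigma_{\max}$ denotes the largest singular value. *)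

theory Defs
  imports "HOL-Analysis.Analysis"
begin

definition conj_transpose :: "complex^'n^'n \<Rightarrow> complex^'n^'n" where
  "conj_transpose M = (\<chi> i j. cnj (M $ j $ i))"

text \<open>Largest singular value: square root of the largest eigenvalue of M^H M
  (these eigenvalues are real and nonnegative).\<close>
definition sigma_max :: "complex^'n^'n \<Rightarrow> real" where
  "sigma_max M = Max {sqrt (Re \<mu>) | \<mu>. det ((\<chi> i j. if i = j then \<mu> else 0) - conj_transpose M ** M) = 0}"

definition Fm :: "nat \<Rightarrow> (nat \<Rightarrow> complex^'n^'n) \<Rightarrow> (nat \<Rightarrow> real) \<Rightarrow> complex \<Rightarrow> complex^'n^'n" where
  "Fm m A \<tau> z = (\<chi> i j. if i = j then z else 0)
      - (\<Sum>i\<in>{0..m}. (\<chi> r c. exp (- z * complex_of_real (\<tau> i)) * (A i $ r $ c)))"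

definition wfun :: "nat \<Rightarrow> (nat \<Rightarrow> real) \<Rightarrow> (nat \<Rightarrow> real) \<Rightarrow> complex \<Rightarrow> real" where
  "wfun m \<tau> w z = (\<Sum>i\<in>{0..m}. cmod (exp (- z * complex_of_real (\<tau> i))) / w i)"

definition ffun :: "nat \<Rightarrow> (nat \<Rightarrow> complex^'n^'n) \<Rightarrow> (nat \<Rightarrow> real) \<Rightarrow> (nat \<Rightarrow> real) \<Rightarrow> complex \<Rightarrow> real" where
  "ffun m A \<tau> w z = wfun m \<tau> w z * sigma_max (matrix_inv (Fm m A \<tau> z))"

definition alpha0 :: "nat \<Rightarrow> (nat \<Rightarrow> complex^'n^'n) \<Rightarrow> (nat \<Rightarrow> real) \<Rightarrow> real" where
  "alpha0 m A \<tau> = Sup {Re z | z. det (Fm m A \<tau> z) = 0}"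

definition alpha_f :: "nat \<Rightarrow> (nat \<Rightarrow> complex^'n^'n) \<Rightarrow> (nat \<Rightarrow> real) \<Rightarrow> (nat \<Rightarrow> real) \<Rightarrow> real \<Rightarrow> real" where
  "alpha_f m A \<tau> w \<sigma> = (SUP \<omega>::real. ffun m A \<tau> w (Complex \<sigma> \<omega>))"

definition alpha_eps :: "nat \<Rightarrow> (nat \<Rightarrow> complex^'n^'n) \<Rightarrow> (nat \<Rightarrow> real) \<Rightarrow> (nat \<Rightarrow> real) \<Rightarrow> real \<Rightarrow> real" where
  "alpha_eps m A \<tau> w \<epsilon> = Sup {Re z | z. det (Fm m A \<tau> z) \<noteq> 0 \<and> ffun m A \<tau> w z = 1 / \<epsilon>}"

end

theory Submission
  imports Defs "HOL-Complex_Analysis.Complex_Analysis"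
begin

text \<open>For \<open>\<sigma> > \<alpha>\<^sub>0\<close> the function \<open>f\<close> is continuous and positive on the line \<open>Re z = \<sigma>\<close> and
  decays like \<open>1/|z|\<close>, so the supremum \<open>\<alpha>\<^sub>f(\<sigma>)\<close> is attained.  \<open>\<alpha>\<^sub>f\<close> is strictly decreasing:
  if unit vectors \<open>u, v\<close> realise the largest singular value of \<open>F(z\<^sub>2)\<^sup>-\<^sup>1\<close> at a maximiser
  \<open>z\<^sub>2\<close> on the line \<open>Re z = \<sigma>\<^sub>2\<close>, then \<open>v\<^sup>H F(z)\<^sup>-\<^sup>1 u\<close> is holomorphic for \<open>Re z > \<alpha>\<^sub>0\<close> and
  vanishes at infinity, so by the strict maximum principle it exceeds its value at \<open>z\<^sub>2\<close>
  somewhere on a line \<open>Re z = \<sigma>\<^sub>1 < \<sigma>\<^sub>2\<close>, where the weight is no smaller.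
  Characteristic roots exist, since otherwise \<open>det F\<close> would be a zero-free entire function of
  exponential type, hence the exponential of an affine function, contradicting
  \<open>det F(x) \<sim> x\<^sup>n\<close> on the real axis.  Near a rightmost root \<open>f\<close> is unbounded; the largest real
  part \<open>\<sigma>\<^sup>*\<close> of a point with \<open>f \<ge> 1/\<epsilon>\<close> then satisfies \<open>\<alpha>\<^sub>f(\<sigma>\<^sup>*) = 1/\<epsilon>\<close>, and monotonicity makes
  \<open>\<sigma>\<^sup>*\<close> unique and the supremum of \<open>Re z\<close> over the level set \<open>f = 1/\<epsilon>\<close>.\<close>

section \<open>The largest singular value\<close>

lemma matrix_vector_mult_mat: "mat c *v x = c *s (x :: 'a::comm_ring_1^'n)"
proof -
  have "\<And>i j. (if i = j then c else 0) * x $ j = (if i = j then c * x $ j else 0)" by simp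
  then show ?thesis by (simp add: vec_eq_iff matrix_vector_mult_def mat_def)
qed

lemma mat_matrix_mult: "mat c ** M = (\<chi> i j. c * (M :: 'a::comm_ring_1^'n^'m) $ i $ j)"
proof -
  have "\<And>i k j. (if i = k then c else 0) * M $ k $ j = (if i = k then c * M $ k $ j else 0)" by simp
  then show ?thesis by (simp add: vec_eq_iff matrix_matrix_mult_def mat_def)
qed

lemma matrix_vector_mult_axis: "((M :: 'a::comm_ring_1^'n^'m) *v axis j 1) $ i = M $ i $ j"
  by (simp add: matrix_vector_mult_def axis_def if_distrib cong: if_cong)

lemma det_eq_0_iff_kernel:
  fixes B :: "'a::field^'n^'n"
  shows "det B = 0 \<longleftrightarrow> (\<exists>x. x \<noteq> 0 \<and> B *v x = 0)"
proof -
  have "det B \<noteq> 0 \<longleftrightarrow> inj ((*v) B)"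
    using det_nz_iff_inj_gen[of "(*v) B"]
    by (simp add: matrix_of_matrix_vector_mul matrix_vector_mul_linear_gen)
  also have "\<dots> \<longleftrightarrow> (\<forall>x. B *v x = 0 \<longrightarrow> x = 0)"
    using vec.linear_inj_iff_eq_0[OF matrix_vector_mul_linear_gen] by (simp add: inj_on_def)
  finally show ?thesis by blast
qed

lemma of_real_scalar_mult: "complex_of_real c *s (x::complex^'n) = c *\<^sub>R x"
proof -
  have "(c *\<^sub>R x) $ i = complex_of_real c * x $ i" for i
    using scaleR_conv_of_real[of c "x $ i"] by simp
  then show ?thesis by (simp add: vec_eq_iff)
qed

lemma complex_matrix_vector_mult_scaleR: "(M::complex^'n^'m) *v (c *\<^sub>R x) = c *\<^sub>R (M *v x)"
  using bounded_linear.linear[OF matrix_vector_mul_bounded_linear[of M]] by (simp add: linear_scale)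

lemma norm_axis_1_complex: "norm (axis k (1::complex) :: complex^'n) = 1"
  by (simp add: norm_eq_sqrt_inner inner_axis_axis)

lemma inner_matrix_vector_conj_transpose:
  fixes M :: "complex^'n^'n"
  shows "inner (M *v x) y = inner x (conj_transpose M *v y)"
proof -
  have cnj_shift: "inner (a * b) c = inner b (cnj a * c)" for a b c :: complex
    by (simp add: inner_complex_def algebra_simps)
  have "inner (M *v x) y = (\<Sum>i\<in>UNIV. \<Sum>j\<in>UNIV. inner (M$i$j * x$j) (y$i))"
    by (simp add: inner_vec_def matrix_vector_mult_def inner_sum_left)
  also have "\<dots> = (\<Sum>j\<in>UNIV. \<Sum>i\<in>UNIV. inner (x$j) (cnj (M$i$j) * y$i))"
    by (subst sum.swap) (simp add: cnj_shift)
  also have "\<dots> = inner x (conj_transpose M *v y)"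
    by (simp add: inner_vec_def matrix_vector_mult_def inner_sum_right conj_transpose_def)
  finally show ?thesis .
qed

lemma inner_gram_matrix:
  fixes M :: "complex^'n^'n"
  shows "inner ((conj_transpose M ** M) *v x) y = inner (M *v x) (M *v y)"
proof -
  have "inner ((conj_transpose M ** M) *v x) y = inner y (conj_transpose M *v (M *v x))"
    by (simp add: matrix_vector_mul_assoc[symmetric] inner_commute)
  also have "\<dots> = inner (M *v y) (M *v x)"
    by (rule inner_matrix_vector_conj_transpose[symmetric])
  finally show ?thesis by (simp add: inner_commute)
qed

lemma inner_scalar_mult_self: "inner ((\<mu>::complex) *s x) (x::complex^'n) = Re \<mu> * (norm x)^2"
proof -
  have "inner (\<mu> *s x) x = (\<Sum>i\<in>UNIV. Re \<mu> * (norm (x$i))^2)"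
    unfolding inner_vec_def
    by (intro sum.cong refl) (simp add: inner_complex_def cmod_def algebra_simps power2_eq_square)
  then show ?thesis
    by (simp add: norm_vec_def L2_set_def sum_distrib_left sum_nonneg)
qed

lemma inner_scalar_mult_ii: "inner ((\<mu>::complex) *s x) (\<i> *s (x::complex^'n)) = Im \<mu> * (norm x)^2"
proof -
  have "inner (\<mu> *s x) (\<i> *s x) = (\<Sum>i\<in>UNIV. Im \<mu> * (norm (x$i))^2)"
    unfolding inner_vec_def
    by (intro sum.cong refl) (simp add: inner_complex_def cmod_def algebra_simps power2_eq_square)
  then show ?thesis
    by (simp add: norm_vec_def L2_set_def sum_distrib_left sum_nonneg)
qed

lemma gram_eigenvalue:
  fixes M :: "complex^'n^'n"
  assumes "(conj_transpose M ** M) *v x = \<mu> *s x"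
  shows "Re \<mu> * (norm x)^2 = (norm (M *v x))^2" and "Im \<mu> * (norm x)^2 = 0"
proof -
  show "Re \<mu> * (norm x)^2 = (norm (M *v x))^2"
    using inner_gram_matrix[of M x x] assms by (simp add: inner_scalar_mult_self power2_norm_eq_inner)
  have "inner (M *v x) (\<i> *s (M *v x)) = 0"
    by (simp add: inner_vec_def inner_complex_def)
  then show "Im \<mu> * (norm x)^2 = 0"
    using inner_gram_matrix[of M x "\<i> *s x"] assms
    by (simp add: inner_scalar_mult_ii vector_scalar_commute)
qed

text \<open>A maximiser of the Rayleigh quotient of \<open>M\<^sup>H M\<close> is an eigenvector: otherwise moving
  it a little in the direction of the residual \<open>q x - M\<^sup>H M x\<close> would increase the quotient.\<close>
lemma gram_eigenvector_of_norm_maximizer: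
  fixes M :: "complex^'n^'n"
  assumes bound: "\<And>y. (norm (M *v y))^2 \<le> q * (norm y)^2"
    and max: "(norm (M *v x))^2 = q * (norm x)^2"
  shows "(conj_transpose M ** M) *v x = complex_of_real q *s x"
proof (rule ccontr)
  define v where "v = complex_of_real q *s x - (conj_transpose M ** M) *v x"
  assume "\<not> ?thesis"
  then have n2_pos: "(norm v)^2 > 0" by (simp add: v_def)
  have v_self: "(norm v)^2 = q * inner x v - inner (M *v x) (M *v v)"
    by (simp add: v_def power2_norm_eq_inner inner_diff_left inner_gram_matrix of_real_scalar_mult)
  define b where "b = q * (norm v)^2 - (norm (M *v v))^2"
  have b0: "b \<ge> 0" using bound[of v] by (simp add: b_def)
  define s where "s = (norm v)^2 / (b + 1)"
  have s0: "s > 0" using n2_pos b0 by (simp add: s_def)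
  have My: "M *v (x - s *\<^sub>R v) = M *v x - s *\<^sub>R (M *v v)"
    by (simp add: matrix_vector_mult_diff_distrib complex_matrix_vector_mult_scaleR)
  have "(norm (M *v (x - s *\<^sub>R v)))^2
      = (norm (M *v x))^2 - 2 * s * inner (M *v x) (M *v v) + s^2 * (norm (M *v v))^2"
    unfolding My power2_norm_eq_inner
    by (simp add: inner_diff_left inner_diff_right inner_commute power2_eq_square algebra_simps)
  moreover have "(norm (x - s *\<^sub>R v))^2 = (norm x)^2 - 2 * s * inner x v + s^2 * (norm v)^2"
    unfolding power2_norm_eq_inner
    by (simp add: inner_diff_left inner_diff_right inner_commute power2_eq_square algebra_simps)
  ultimately have "(norm (M *v x))^2 - 2 * s * inner (M *v x) (M *v v) + s^2 * (norm (M *v v))^2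
      \<le> q * ((norm x)^2 - 2 * s * inner x v + s^2 * (norm v)^2)"
    using bound[of "x - s *\<^sub>R v"] by simp
  then have "2 * s * (q * inner x v - inner (M *v x) (M *v v)) \<le> s^2 * b"
    using max by (simp add: b_def algebra_simps)
  then have "s * (2 * (norm v)^2) \<le> s * (s * b)"
    unfolding v_self by (simp add: power2_eq_square mult_ac)
  then have "2 * (norm v)^2 \<le> s * b" using s0 by (rule mult_left_le_imp_le)
  moreover have "s * b < (norm v)^2"
  proof -
    have "s * b = (norm v)^2 * (b / (b + 1))" by (simp add: s_def)
    also have "\<dots> < (norm v)^2 * 1" using n2_pos b0 by (intro mult_strict_left_mono) auto
    finally show ?thesis by simp
  qed
  ultimately show False using n2_pos by simp
qed

lemma det_mat_minus_eq_0_iff: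
  fixes B :: "'a::field^'n^'n"
  shows "det (mat \<mu> - B) = 0 \<longleftrightarrow> (\<exists>x. x \<noteq> 0 \<and> B *v x = \<mu> *s x)"
  by (simp add: det_eq_0_iff_kernel matrix_vector_mult_diff_rdistrib matrix_vector_mult_mat
      eq_commute[of "B *v _"])

text \<open>Eigenvectors of the Hermitian matrix \<open>M\<^sup>H M\<close> for distinct eigenvalues are orthogonal,
  hence linearly independent over the reals.\<close>
lemma finite_gram_eigenvalues:
  fixes M :: "complex^'n^'n"
  shows "finite {\<mu>. det (mat \<mu> - conj_transpose M ** M) = 0}" (is "finite ?E")
proof -
  define H where "H = conj_transpose M ** M"
  define ev where "ev \<mu> = (SOME x. x \<noteq> 0 \<and> H *v x = \<mu> *s x)" for \<mu>
  have ev: "ev \<mu> \<noteq> 0" "H *v ev \<mu> = \<mu> *s ev \<mu>" if "\<mu> \<in> ?E" for \<mu>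
    using someI_ex[of "\<lambda>x. x \<noteq> 0 \<and> H *v x = \<mu> *s x"] that
    by (auto simp: ev_def H_def det_mat_minus_eq_0_iff)
  have real: "\<mu> = complex_of_real (Re \<mu>)" if "\<mu> \<in> ?E" for \<mu>
    using gram_eigenvalue(2)[of M "ev \<mu>" \<mu>] ev[OF that] by (simp add: H_def complex_eq_iff)
  have ev_real: "H *v ev \<mu> = Re \<mu> *\<^sub>R ev \<mu>" if "\<mu> \<in> ?E" for \<mu>
    using ev(2)[OF that] real[OF that] by (metis of_real_scalar_mult)
  have orth: "inner (ev \<mu>1) (ev \<mu>2) = 0" if "\<mu>1 \<in> ?E" "\<mu>2 \<in> ?E" "\<mu>1 \<noteq> \<mu>2" for \<mu>1 \<mu>2
  proof -
    have "Re \<mu>1 * inner (ev \<mu>1) (ev \<mu>2) = inner (M *v ev \<mu>1) (M *v ev \<mu>2)"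
      using inner_gram_matrix[of M "ev \<mu>1" "ev \<mu>2"] ev_real[OF that(1)] by (simp add: H_def)
    also have "\<dots> = Re \<mu>2 * inner (ev \<mu>1) (ev \<mu>2)"
      using inner_gram_matrix[of M "ev \<mu>2" "ev \<mu>1"] ev_real[OF that(2)]
      by (simp add: H_def inner_commute)
    finally have "(Re \<mu>1 - Re \<mu>2) * inner (ev \<mu>1) (ev \<mu>2) = 0" by (simp add: left_diff_distrib)
    moreover have "Re \<mu>1 \<noteq> Re \<mu>2"
      using that real by metis
    ultimately show ?thesis by simp
  qed
  have "inj_on ev ?E"
  proof (rule inj_onI)
    fix \<mu>1 \<mu>2 assume \<mu>: "\<mu>1 \<in> ?E" "\<mu>2 \<in> ?E" "ev \<mu>1 = ev \<mu>2"
    show "\<mu>1 = \<mu>2"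
    proof (rule ccontr)
      assume "\<mu>1 \<noteq> \<mu>2"
      then have "inner (ev \<mu>1) (ev \<mu>1) = 0" using orth[OF \<mu>(1,2)] \<mu>(3) by simp
      then show False using ev(1)[OF \<mu>(1)] by simp
    qed
  qed
  moreover have "pairwise orthogonal (ev ` ?E)"
    unfolding pairwise_def orthogonal_def using orth by blast
  then have "independent (ev ` ?E)"
    using ev(1) by (intro pairwise_orthogonal_independent) auto
  then have "finite (ev ` ?E)" using independent_bound by blast
  ultimately show ?thesis using finite_imageD by blast
qed

lemma sigma_max_eq_norm_maximizer:
  fixes M :: "complex^'n^'n"
  assumes x0: "norm x0 = 1" and max: "\<And>y. norm (M *v y) \<le> norm (M *v x0) * norm y"
  shows "sigma_max M = norm (M *v x0)"
proof -
  define r where "r = norm (M *v x0)"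
  define E where "E = {\<mu>. det (mat \<mu> - conj_transpose M ** M) = 0}"
  have bound: "(norm (M *v y))^2 \<le> r^2 * (norm y)^2" for y
    using power_mono[OF max[of y]] by (simp add: r_def power_mult_distrib)
  have "(conj_transpose M ** M) *v x0 = complex_of_real (r^2) *s x0"
    using bound x0 by (intro gram_eigenvector_of_norm_maximizer) (auto simp: r_def)
  moreover have "x0 \<noteq> 0" using x0 by auto
  ultimately have "\<exists>x. x \<noteq> 0 \<and> (conj_transpose M ** M) *v x = complex_of_real (r^2) *s x"
    by blast
  then have r2_in_E: "complex_of_real (r^2) \<in> E"
    by (simp only: E_def mem_Collect_eq det_mat_minus_eq_0_iff)
  have E_le: "Re \<mu> \<le> r^2" if "\<mu> \<in> E" for \<mu>
  proof -
    have "\<exists>x. x \<noteq> 0 \<and> (conj_transpose M ** M) *v x = \<mu> *s x"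
      using that by (simp only: E_def mem_Collect_eq det_mat_minus_eq_0_iff)
    then obtain x where x: "x \<noteq> 0" "(conj_transpose M ** M) *v x = \<mu> *s x"
      by blast
    have "Re \<mu> * (norm x)^2 \<le> r^2 * (norm x)^2"
      using gram_eigenvalue(1)[OF x(2)] bound[of x] by simp
    then show ?thesis using x(1) by simp
  qed
  have "sigma_max M = Max ((\<lambda>\<mu>. sqrt (Re \<mu>)) ` E)"
    by (simp add: sigma_max_def E_def mat_def image_Collect)
  also have "\<dots> = sqrt (r^2)"
  proof (rule Max_eqI)
    show "finite ((\<lambda>\<mu>. sqrt (Re \<mu>)) ` E)"
      unfolding E_def by (intro finite_imageI finite_gram_eigenvalues)
    show "sqrt (r^2) \<in> (\<lambda>\<mu>. sqrt (Re \<mu>)) ` E"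
      using r2_in_E by (metis Re_complex_of_real image_eqI)
    fix y assume "y \<in> (\<lambda>\<mu>. sqrt (Re \<mu>)) ` E"
    then show "y \<le> sqrt (r^2)" using E_le real_sqrt_le_mono by blast
  qed
  finally show ?thesis by (simp add: r_def)
qed

lemma sigma_max_maximizer:
  fixes M :: "complex^'n^'n"
  obtains x0 where "norm x0 = 1" "norm (M *v x0) = sigma_max M"
    "\<And>y. norm (M *v y) \<le> sigma_max M * norm y"
proof -
  have "continuous_on (sphere 0 1) (\<lambda>y. norm (M *v y))"
    by (intro continuous_intros linear_continuous_on matrix_vector_mul_bounded_linear)
  then have "\<exists>x0 \<in> sphere 0 1. \<forall>y \<in> sphere 0 1. norm (M *v y) \<le> norm (M *v x0)"
    by (intro continuous_attains_sup) auto
  then obtain x0 where "x0 \<in> sphere 0 1" and "\<forall>y \<in> sphere 0 1. norm (M *v y) \<le> norm (M *v x0)"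
    by blast
  then have x0: "norm x0 = 1" and x0max: "\<And>y. norm y = 1 \<Longrightarrow> norm (M *v y) \<le> norm (M *v x0)"
    by auto
  have max: "norm (M *v y) \<le> norm (M *v x0) * norm y" for y
  proof (cases "y = 0")
    case False
    then have "norm (M *v ((1 / norm y) *\<^sub>R y)) \<le> norm (M *v x0)" by (intro x0max) simp
    then show ?thesis using False
      by (simp add: complex_matrix_vector_mult_scaleR divide_le_eq mult.commute)
  qed simp
  have "norm (M *v x0) = sigma_max M"
    by (rule sigma_max_eq_norm_maximizer[OF x0 max, symmetric])
  then show ?thesis using that[OF x0] max by metis
qed

lemma norm_matrix_vector_le_sigma_max: "norm ((M::complex^'n^'n) *v y) \<le> sigma_max M * norm y"
  using sigma_max_maximizer by blast

lemma sigma_max_nonneg: "sigma_max (M::complex^'n^'n) \<ge> 0"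
proof -
  obtain x0 where "norm (M *v x0) = sigma_max M" using sigma_max_maximizer by blast
  then show ?thesis by (metis norm_ge_zero)
qed

lemma norm_entry_le_sigma_max: "norm ((M::complex^'n^'n) $ i $ j) \<le> sigma_max M"
  using Finite_Cartesian_Product.norm_nth_le[of "M *v axis j 1" i] norm_matrix_vector_le_sigma_max[of M "axis j 1"]
  by (simp add: matrix_vector_mult_axis norm_axis_1_complex)

definition entry_norm_sum :: "complex^'n^'m \<Rightarrow> real" where
  "entry_norm_sum M = (\<Sum>i\<in>UNIV. \<Sum>j\<in>UNIV. norm (M $ i $ j))"

lemma entry_norm_sum_nonneg: "entry_norm_sum M \<ge> 0"
  by (simp add: entry_norm_sum_def sum_nonneg)

lemma norm_entry_le_entry_norm_sum: "norm (M $ i $ j) \<le> entry_norm_sum M"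
proof -
  have "norm (M $ i $ j) \<le> (\<Sum>j\<in>UNIV. norm (M $ i $ j))" by (rule member_le_sum) auto
  also have "\<dots> \<le> entry_norm_sum M"
    unfolding entry_norm_sum_def by (rule member_le_sum[of i]) (auto intro: sum_nonneg)
  finally show ?thesis .
qed

lemma norm_matrix_vector_le_entry_norm_sum: "norm (M *v x) \<le> entry_norm_sum M * norm x"
proof -
  have "norm (M *v x) \<le> (\<Sum>i\<in>UNIV. norm ((M *v x) $ i))"
    by (simp add: norm_vec_def L2_set_le_sum)
  also have "\<dots> \<le> (\<Sum>i\<in>UNIV. \<Sum>j\<in>UNIV. norm (M $ i $ j) * norm x)"
  proof (intro sum_mono)
    fix i
    have "norm ((M *v x) $ i) \<le> (\<Sum>j\<in>UNIV. norm (M $ i $ j * x $ j))"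
      unfolding matrix_vector_mult_def by (simp add: norm_sum)
    also have "\<dots> \<le> (\<Sum>j\<in>UNIV. norm (M $ i $ j) * norm x)"
      by (intro sum_mono) (simp add: norm_mult mult_left_mono Finite_Cartesian_Product.norm_nth_le)
    finally show "norm ((M *v x) $ i) \<le> (\<Sum>j\<in>UNIV. norm (M $ i $ j) * norm x)" .
  qed
  also have "\<dots> = entry_norm_sum M * norm x" by (simp add: entry_norm_sum_def sum_distrib_right)
  finally show ?thesis .
qed

lemma norm_le_entry_norm_sum: "norm M \<le> entry_norm_sum M"
proof -
  have l1: "norm (x :: 'v::real_normed_vector^'k) \<le> (\<Sum>i\<in>UNIV. norm (x $ i))" for x
    by (simp add: norm_vec_def L2_set_le_sum)
  have "norm M \<le> (\<Sum>i\<in>UNIV. norm (M $ i))" by (rule l1)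
  also have "\<dots> \<le> entry_norm_sum M" unfolding entry_norm_sum_def by (intro sum_mono l1)
  finally show ?thesis .
qed

lemma entry_norm_sum_le_norm: "entry_norm_sum (M :: complex^'n^'m) \<le> real (CARD('m) * CARD('n)) * norm M"
proof -
  have "entry_norm_sum M \<le> (\<Sum>i\<in>(UNIV::'m set). \<Sum>j\<in>(UNIV::'n set). norm M)"
    unfolding entry_norm_sum_def
    by (intro sum_mono) (meson Finite_Cartesian_Product.norm_nth_le order_trans)
  then show ?thesis by simp
qed

lemma sigma_max_le_add_entry_norm_sum:
  "sigma_max (M::complex^'n^'n) \<le> sigma_max N + entry_norm_sum (M - N)"
proof -
  obtain x where x: "norm x = 1" "norm (M *v x) = sigma_max M" by (rule sigma_max_maximizer)
  have "M *v x = N *v x + (M - N) *v x" by (simp add: matrix_vector_mult_diff_rdistrib)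
  then have "norm (M *v x) \<le> norm (N *v x) + norm ((M - N) *v x)"
    by (metis norm_triangle_ineq)
  also have "\<dots> \<le> sigma_max N + entry_norm_sum (M - N)"
    using norm_matrix_vector_le_sigma_max[of N x] norm_matrix_vector_le_entry_norm_sum[of "M - N" x] x(1)
    by simp
  finally show ?thesis using x(2) by simp
qed

lemma continuous_on_sigma_max: "continuous_on S (sigma_max :: complex^'n^'n \<Rightarrow> real)"
proof -
  define C where "C = real (CARD('n) * CARD('n))"
  have "\<bar>sigma_max M - sigma_max N\<bar> \<le> C * dist M N" for M N :: "complex^'n^'n"
    using sigma_max_le_add_entry_norm_sum[of M N] sigma_max_le_add_entry_norm_sum[of N M]
      entry_norm_sum_le_norm[of "M - N"] entry_norm_sum_le_norm[of "N - M"]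
    by (simp add: C_def dist_norm norm_minus_commute abs_le_iff)
  then have "C-lipschitz_on S sigma_max"
    by (intro lipschitz_onI) (auto simp: C_def dist_real_def)
  then show ?thesis by (rule lipschitz_on_continuous_on)
qed

lemma matrix_inv_det_nz:
  fixes B :: "'a::field^'n^'n"
  assumes "det B \<noteq> 0"
  shows "B ** matrix_inv B = mat 1" and "matrix_inv B ** B = mat 1"
proof -
  have "invertible B" using assms invertible_det_nz by blast
  then have "B ** matrix_inv B = mat 1 \<and> matrix_inv B ** B = mat 1"
    unfolding matrix_inv_def invertible_def by (rule someI_ex)
  then show "B ** matrix_inv B = mat 1" "matrix_inv B ** B = mat 1" by auto
qed

lemma matrix_vector_mult_matrix_inv:
  fixes B :: "'a::field^'n^'n"
  shows "det B \<noteq> 0 \<Longrightarrow> B *v (matrix_inv B *v x) = x"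
  by (simp add: matrix_vector_mul_assoc matrix_inv_det_nz)

lemma matrix_inv_vector_cramer:
  fixes B :: "'a::field^'n^'n"
  assumes "det B \<noteq> 0"
  shows "(matrix_inv B *v b) $ k = det (\<chi> i j. if j = k then b $ i else B $ i $ j) / det B"
  using cramer[OF assms, of "matrix_inv B *v b" b] matrix_vector_mult_matrix_inv[OF assms] by simp

lemma det_nz_if_norm_matrix_vector_ge:
  fixes B :: "complex^'n^'n"
  assumes "a > 0" "\<And>y. a * norm y \<le> norm (B *v y)"
  shows "det B \<noteq> 0"
proof
  assume "det B = 0"
  then obtain x where "x \<noteq> 0" "B *v x = 0" by (auto simp: det_eq_0_iff_kernel)
  then show False using assms(1) assms(2)[of x] by (simp add: mult_le_0_iff)
qed

lemma sigma_max_matrix_inv_le: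
  fixes B :: "complex^'n^'n"
  assumes "a > 0" "\<And>y. a * norm y \<le> norm (B *v y)"
  shows "sigma_max (matrix_inv B) \<le> 1 / a"
proof -
  obtain x where x: "norm x = 1" "norm (matrix_inv B *v x) = sigma_max (matrix_inv B)"
    by (rule sigma_max_maximizer)
  have "a * norm (matrix_inv B *v x) \<le> norm (B *v (matrix_inv B *v x))" by (rule assms(2))
  also have "\<dots> = 1"
    using matrix_vector_mult_matrix_inv[OF det_nz_if_norm_matrix_vector_ge[OF assms]] x(1) by simp
  finally show ?thesis using x(2) assms(1) by (simp add: field_simps mult.commute)
qed

lemma sigma_max_matrix_inv_pos:
  fixes B :: "complex^'n^'n"
  assumes "det B \<noteq> 0"
  shows "sigma_max (matrix_inv B) > 0"
proof (rule ccontr)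
  obtain k :: 'n where True by blast
  assume "\<not> ?thesis"
  then have "norm (matrix_inv B *v axis k 1) \<le> 0"
    using norm_matrix_vector_le_sigma_max[of "matrix_inv B" "axis k 1"] sigma_max_nonneg[of "matrix_inv B"]
    by simp
  then have "B *v (matrix_inv B *v axis k 1) = 0" by simp
  then show False using matrix_vector_mult_matrix_inv[OF assms] by (simp add: axis_eq_0_iff)
qed

lemma norm_det_le:
  fixes M :: "complex^'n^'n"
  assumes "\<And>i j. norm (M $ i $ j) \<le> B"
  shows "norm (det M) \<le> fact CARD('n) * B ^ CARD('n)"
proof -
  have "norm (det M) \<le> (\<Sum>p\<in>{p. p permutes (UNIV::'n set)}. norm (of_int (sign p) * (\<Prod>i\<in>UNIV. M $ i $ p i)))"
    unfolding det_def by (rule norm_sum)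
  also have "\<dots> \<le> (\<Sum>p\<in>{p. p permutes (UNIV::'n set)}. B ^ CARD('n))"
  proof (intro sum_mono)
    fix p :: "'n \<Rightarrow> 'n"
    have "norm (of_int (sign p) :: complex) = 1" by (simp add: sign_def)
    then have "norm (of_int (sign p) * (\<Prod>i\<in>UNIV. M $ i $ p i)) = (\<Prod>i\<in>UNIV. norm (M $ i $ p i))"
      by (simp only: norm_mult prod_norm)
    also have "\<dots> \<le> (\<Prod>i\<in>(UNIV::'n set). B)" by (intro prod_mono) (auto simp: assms)
    finally show "norm (of_int (sign p) * (\<Prod>i\<in>UNIV. M $ i $ p i)) \<le> B ^ CARD('n)" by simp
  qed
  also have "\<dots> = fact CARD('n) * B ^ CARD('n)" by (simp add: card_permutations)
  finally show ?thesis .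
qed

lemma norm_det_sigma_max_matrix_inv_ge_1:
  fixes B :: "complex^'n^'n"
  assumes "det B \<noteq> 0"
  shows "1 \<le> norm (det B) * (fact CARD('n) * sigma_max (matrix_inv B) ^ CARD('n))"
proof -
  have "det B * det (matrix_inv B) = 1"
    using matrix_inv_det_nz(1)[OF assms] det_mul[of B "matrix_inv B"] by simp
  then have "1 = norm (det B) * norm (det (matrix_inv B))" by (metis norm_mult norm_one)
  also have "\<dots> \<le> norm (det B) * (fact CARD('n) * sigma_max (matrix_inv B) ^ CARD('n))"
    by (intro mult_left_mono norm_det_le norm_entry_le_sigma_max) simp
  finally show ?thesis .
qed

lemma tendsto_det:
  fixes f :: "'a \<Rightarrow> complex^'n^'n"
  assumes "(f \<longlongrightarrow> M) F"
  shows "((\<lambda>x. det (f x)) \<longlongrightarrow> det M) F"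
  unfolding det_def by (intro tendsto_intros tendsto_vec_nth assms)

lemma holomorphic_on_det:
  assumes "\<And>i j. (\<lambda>z. (M z :: complex^'n^'n) $ i $ j) holomorphic_on S"
  shows "(\<lambda>z. det (M z :: complex^'n^'n)) holomorphic_on S"
  unfolding det_def by (intro holomorphic_intros assms)

definition cinner :: "complex^'n \<Rightarrow> complex^'n \<Rightarrow> complex" where
  "cinner v x = (\<Sum>j\<in>UNIV. cnj (v $ j) * x $ j)"

lemma norm_cinner_le: "norm (cinner v x) \<le> norm v * norm x"
proof -
  have "norm (cinner v x) \<le> (\<Sum>j\<in>UNIV. norm (v $ j) * norm (x $ j))"
    unfolding cinner_def using norm_sum by (fastforce simp: norm_mult intro: order_trans)
  also have "\<dots> \<le> L2_set (\<lambda>j. norm (v $ j)) UNIV * L2_set (\<lambda>j. norm (x $ j)) UNIV"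
    using L2_set_mult_ineq[of "\<lambda>j. norm (v $ j)" "\<lambda>j. norm (x $ j)" UNIV] by simp
  finally show ?thesis by (simp add: norm_vec_def)
qed

lemma cinner_self: "cinner v v = complex_of_real ((norm v)^2)"
proof -
  have "cinner v v = (\<Sum>j\<in>UNIV. complex_of_real ((norm (v $ j))^2))"
    unfolding cinner_def by (intro sum.cong refl) (metis complex_norm_square mult.commute of_real_power)
  also have "\<dots> = complex_of_real ((norm v)^2)" by (simp add: norm_vec_def L2_set_def sum_nonneg)
  finally show ?thesis .
qed

lemma cinner_scaleR_right: "cinner v (c *\<^sub>R x) = complex_of_real c * cinner v x"
  by (simp add: cinner_def sum_distrib_left of_real_scalar_mult[symmetric] mult_ac)

section \<open>Entire functions of exponential type\<close>

lemma cmod_less_cmod_diff_if_Re_less: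
  assumes "Re u < K" "K > 0"
  shows "cmod u < cmod (complex_of_real (2 * K) - u)"
proof -
  have "(cmod u)^2 = (Re u)^2 + (Im u)^2"
    and "(cmod (complex_of_real (2 * K) - u))^2 = (2 * K - Re u)^2 + (Im u)^2"
    by (simp_all add: cmod_power2)
  moreover have "(2 * K - Re u)^2 - (Re u)^2 = 4 * K * (K - Re u)"
    by (simp add: power2_eq_square algebra_simps)
  moreover have "4 * K * (K - Re u) > 0" using assms by simp
  ultimately have "(cmod u)^2 < (cmod (complex_of_real (2 * K) - u))^2" by linarith
  then show ?thesis by (rule power2_less_imp_less) simp
qed

text \<open>The Borel--Carath\'eodory inequality, proved by applying Schwarz's lemma to the
  bounded function \<open>\<psi> / (2K - \<psi>)\<close> on the unit disc.\<close>
lemma Borel_Caratheodory: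
  fixes \<psi> :: "complex \<Rightarrow> complex"
  assumes hol: "\<psi> holomorphic_on ball 0 R" and "\<psi> 0 = 0"
    and Re_less: "\<And>\<zeta>. cmod \<zeta> < R \<Longrightarrow> Re (\<psi> \<zeta>) < K" and z: "cmod z < R"
  shows "cmod (\<psi> z) \<le> 2 * K * cmod z / (R - cmod z)"
proof -
  have R: "R > 0" using z norm_ge_zero[of z] by linarith
  have K: "K > 0" using Re_less[of 0] R \<open>\<psi> 0 = 0\<close> by simp
  have den: "complex_of_real (2 * K) - \<psi> \<zeta> \<noteq> 0" if "cmod \<zeta> < R" for \<zeta>
    using Re_less[OF that] K by (auto simp: complex_eq_iff)
  define h where "h t = \<psi> (of_real R * t) / (complex_of_real (2 * K) - \<psi> (of_real R * t))" for t
  have scaled: "cmod (of_real R * t) < R" if "t \<in> ball 0 1" for t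
    using that R by (simp add: norm_mult)
  have "(*) (complex_of_real R) ` ball 0 1 \<subseteq> ball 0 R" using scaled by auto
  then have "(\<lambda>t. \<psi> (of_real R * t)) holomorphic_on ball 0 1"
    using holomorphic_on_compose_gen[of "\<lambda>t. of_real R * t" "ball 0 1" \<psi> "ball 0 R"] hol
    by (auto simp: o_def intro: holomorphic_intros)
  then have "h holomorphic_on ball 0 1"
    unfolding h_def using den scaled by (intro holomorphic_intros) auto
  moreover have "norm (h t) < 1" if "norm t < 1" for t
    using cmod_less_cmod_diff_if_Re_less[OF Re_less[OF scaled] K] den[OF scaled] that
    by (simp add: h_def norm_divide divide_less_eq)
  moreover have "norm (complex_of_real (1 / R) * z) < 1"
    using z R by (simp add: norm_mult norm_divide divide_less_eq)
  ultimately have "cmod (h (complex_of_real (1 / R) * z)) \<le> cmod z / R"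
    using Schwarz_Lemma(1)[of h "complex_of_real (1 / R) * z"] R \<open>\<psi> 0 = 0\<close>
    by (simp add: h_def norm_mult norm_divide)
  moreover have "of_real R * (complex_of_real (1 / R) * z) = z" using R by simp
  ultimately have "cmod (\<psi> z) \<le> cmod z / R * cmod (complex_of_real (2 * K) - \<psi> z)"
    using den[OF z] by (simp add: h_def norm_divide divide_le_eq)
  also have "\<dots> \<le> cmod z / R * (2 * K + cmod (\<psi> z))"
    using norm_triangle_ineq4[of "complex_of_real (2 * K)" "\<psi> z"] K R
    by (intro mult_left_mono) auto
  finally have "cmod (\<psi> z) * (R - cmod z) \<le> 2 * K * cmod z"
    using R by (simp add: field_simps)
  then show ?thesis using z by (simp add: field_simps)
qed

lemma entire_norm_le_if_Re_le:
  fixes \<phi> :: "complex \<Rightarrow> complex"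
  assumes hol: "\<phi> holomorphic_on UNIV" and a1: "a1 \<ge> 0"
    and Re_le: "\<And>z. Re (\<phi> z) \<le> a0 + a1 * cmod z"
  shows "cmod (\<phi> z) \<le> 3 * cmod (\<phi> 0) + 2 * a0 + 2 * a1 + 2 + 4 * a1 * cmod z"
proof -
  define R where "R = 2 * cmod z + 1"
  define K where "K = a0 + a1 * R + cmod (\<phi> 0) + 1"
  have "Re (\<phi> \<zeta> - \<phi> 0) < K" if "cmod \<zeta> < R" for \<zeta>
  proof -
    have "Re (\<phi> \<zeta> - \<phi> 0) \<le> a0 + a1 * cmod \<zeta> + cmod (\<phi> 0)"
      using Re_le[of \<zeta>] abs_Re_le_cmod[of "\<phi> 0"] by simp
    also have "\<dots> \<le> a0 + a1 * R + cmod (\<phi> 0)" using that a1 by (simp add: mult_left_mono)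
    finally show ?thesis by (simp add: K_def)
  qed
  moreover have "cmod z < R" unfolding R_def using norm_ge_zero[of z] by linarith
  ultimately have "cmod (\<phi> z - \<phi> 0) \<le> 2 * K * cmod z / (R - cmod z)"
    by (intro Borel_Caratheodory[where \<psi> = "\<lambda>\<zeta>. \<phi> \<zeta> - \<phi> 0"] holomorphic_intros
        holomorphic_on_subset[OF hol]) auto
  also have "\<dots> \<le> 2 * K"
  proof -
    have "a1 * R \<ge> 0" using a1 by (simp add: R_def)
    then have "K \<ge> 0"
      using Re_le[of 0] abs_Re_le_cmod[of "\<phi> 0"] by (simp add: K_def)
    moreover have "R - cmod z = cmod z + 1" by (simp add: R_def)
    ultimately show ?thesis
      using norm_ge_zero[of z] by (simp add: divide_le_eq mult_left_mono add_nonneg_pos)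
  qed
  finally show ?thesis
    using norm_triangle_ineq2[of "\<phi> z" "\<phi> 0"] by (simp add: K_def R_def algebra_simps)
qed

lemma entire_affine_if_linear_growth:
  fixes \<phi> :: "complex \<Rightarrow> complex"
  assumes hol: "\<phi> holomorphic_on UNIV" and "c0 \<ge> 0"
    and bound: "\<And>z. cmod (\<phi> z) \<le> c0 + c1 * cmod z"
  shows "\<exists>a b. \<forall>z. \<phi> z = a * z + b"
proof -
  have "norm (\<phi> z) \<le> (c0 + c1) * norm z ^ 1" if "1 \<le> norm z" for z
  proof -
    have "c0 * 1 \<le> c0 * norm z" using mult_left_mono[OF that \<open>c0 \<ge> 0\<close>] .
    then show ?thesis using bound[of z] by (simp add: distrib_right)
  qed
  then have Taylor: "\<phi> z = (\<Sum>k\<le>1. (deriv ^^ k) \<phi> 0 / fact k * z ^ k)" for z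
    by (rule Liouville_polynomial[OF hol])
  have "{..1::nat} = {0, 1}" by auto
  then have "\<phi> z = deriv \<phi> 0 * z + \<phi> 0" for z using Taylor[of z] by simp
  then show ?thesis by blast
qed

lemma zero_free_entire_exp_type:
  fixes f :: "complex \<Rightarrow> complex"
  assumes hol: "f holomorphic_on UNIV" and nz: "\<And>z. f z \<noteq> 0"
    and growth: "\<And>z. norm (f z) \<le> exp (a0 + a1 * cmod z)"
  shows "\<exists>a b. \<forall>z. f z = exp (a * z + b)"
proof -
  obtain \<phi> where \<phi>: "\<phi> holomorphic_on UNIV" "\<And>z. exp (\<phi> z) = f z"
    using holomorphic_logarithm_exists[of UNIV f 0] hol nz by auto
  have "Re (\<phi> z) \<le> a0 + \<bar>a1\<bar> * cmod z" for z
  proof -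
    have "exp (Re (\<phi> z)) = norm (exp (\<phi> z))" by (simp add: norm_exp_eq_Re)
    also have "\<dots> \<le> exp (a0 + a1 * cmod z)" using growth[of z] by (simp add: \<phi>(2))
    finally have "Re (\<phi> z) \<le> a0 + a1 * cmod z" by simp
    moreover have "a1 * cmod z \<le> \<bar>a1\<bar> * cmod z" by (simp add: mult_right_mono)
    ultimately show ?thesis by simp
  qed
  then have "cmod (\<phi> z) \<le> (3 * cmod (\<phi> 0) + 2 * a0 + 2 * \<bar>a1\<bar> + 2) + 4 * \<bar>a1\<bar> * cmod z" for z
    using entire_norm_le_if_Re_le[OF \<phi>(1)] by simp
  moreover have "3 * cmod (\<phi> 0) + 2 * a0 + 2 * \<bar>a1\<bar> + 2 \<ge> 0"
    using \<open>Re (\<phi> 0) \<le> a0 + \<bar>a1\<bar> * cmod 0\<close> abs_Re_le_cmod[of "\<phi> 0"] by simp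
  ultimately obtain a b where ab: "\<And>z. \<phi> z = a * z + b"
    using entire_affine_if_linear_growth[OF \<phi>(1)] by blast
  have "f z = exp (a * z + b)" for z using \<phi>(2)[of z] by (simp add: ab)
  then show ?thesis by blast
qed

text \<open>If \<open>g x = e^(\<alpha>x+\<beta>) / x^n\<close> had a nonzero limit then so would \<open>g (2x) / g x ^ 2\<close>; but
  that quotient is \<open>e^-\<beta> x^n / 2^n\<close>.\<close>
lemma exp_affine_over_power_not_tendsto:
  assumes "n \<ge> 1" "c \<noteq> 0"
  shows "\<not> ((\<lambda>x::real. exp (\<alpha> * x + \<beta>) / x ^ n) \<longlongrightarrow> c) at_top"
proof
  define g where "g x = exp (\<alpha> * x + \<beta>) / x ^ n" for x :: real
  assume "(g \<longlongrightarrow> c) at_top"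
  moreover have "filterlim (\<lambda>x::real. 2 * x) at_top at_top"
    by (rule filterlim_tendsto_pos_mult_at_top[OF tendsto_const _ filterlim_ident]) simp
  ultimately have "((\<lambda>x. g (2 * x)) \<longlongrightarrow> c) at_top" by (rule filterlim_compose)
  then have conv: "((\<lambda>x. g (2 * x) / (g x)^2) \<longlongrightarrow> c / c^2) at_top"
    using \<open>(g \<longlongrightarrow> c) at_top\<close> assms(2) by (intro tendsto_intros) auto
  have ev: "\<forall>\<^sub>F x in at_top. g (2 * x) / (g x)^2 = exp (- \<beta>) / 2 ^ n * x ^ n"
    using eventually_gt_at_top[of 0]
  proof eventually_elim
    case (elim x)
    have "exp (\<alpha> * (2 * x) + \<beta>) = exp (\<alpha> * x + \<beta>)^2 * exp (- \<beta>)"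
      by (simp add: power2_eq_square exp_add[symmetric] algebra_simps)
    then show ?case using elim by (simp add: g_def power_mult_distrib power_divide power2_eq_square)
  qed
  have lim: "filterlim (\<lambda>x::real. exp (- \<beta>) / 2 ^ n * x ^ n) at_top at_top"
  proof (rule filterlim_tendsto_pos_mult_at_top[OF tendsto_const])
    show "filterlim (\<lambda>x::real. x ^ n) at_top at_top"
      by (rule filterlim_pow_at_top[OF _ filterlim_ident]) (use assms(1) in simp)
  qed simp
  have "filterlim (\<lambda>x. g (2 * x) / (g x)^2) at_top at_top"
    using filterlim_cong[OF refl refl ev] lim by simp
  then have "filterlim (\<lambda>x. g (2 * x) / (g x)^2) at_infinity at_top"
    by (rule filterlim_at_top_imp_at_infinity)
  then show False
    by (rule not_tendsto_and_filterlim_at_infinity[OF trivial_limit_at_top_linorder conv])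
qed

lemma continuous_attains_sup_if_less_outside:
  fixes g :: "real \<Rightarrow> real"
  assumes "continuous_on UNIV g" and "\<And>x. R < \<bar>x\<bar> \<Longrightarrow> g x < g 0"
  shows "\<exists>x0. \<forall>x. g x \<le> g x0"
proof -
  have "R \<ge> 0" using assms(2)[of 0] by (cases "R < 0") auto
  then have "\<exists>x0\<in>{-R..R}. \<forall>x\<in>{-R..R}. g x \<le> g x0"
    by (intro continuous_attains_sup continuous_on_subset[OF assms(1)]) auto
  then obtain x0 where x0: "x0 \<in> {-R..R}" "\<And>x. x \<in> {-R..R} \<Longrightarrow> g x \<le> g x0" by blast
  have "g x \<le> g x0" for x
  proof (cases "\<bar>x\<bar> \<le> R")
    case False
    then have "g x < g 0" using assms(2) by simp
    also have "g 0 \<le> g x0" using x0(2)[of 0] \<open>R \<ge> 0\<close> by simp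
    finally show ?thesis by simp
  qed (use x0(2) in \<open>auto simp: abs_le_iff\<close>)
  then show ?thesis by blast
qed

lemma frontier_half_disc:
  "frontier ({z. \<sigma> < Re z} \<inter> ball 0 R) \<subseteq> {z. Re z = \<sigma>} \<union> {z. \<sigma> \<le> Re z \<and> cmod z = R}"
proof -
  have "closure ({z. \<sigma> < Re z} \<inter> ball 0 R) \<subseteq> {z. \<sigma> \<le> Re z} \<inter> cball 0 R"
    by (intro closure_minimal) (auto intro: closed_Int closed_halfspace_Re_ge)
  moreover have "interior ({z. \<sigma> < Re z} \<inter> ball 0 R) = {z. \<sigma> < Re z} \<inter> ball 0 R"
    by (intro interior_open open_Int open_halfspace_Re_gt open_ball)
  ultimately show ?thesis by (auto simp: frontier_def)
qed

text \<open>The function is small on the arc of a large half-disc; if it never exceeded \<open>|h z\<^sub>0|\<close> on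
  the line, its modulus would be maximal at the interior point \<open>z\<^sub>0\<close>, forcing it to be constant.\<close>
lemma half_plane_maximum_modulus_strict:
  fixes h :: "complex \<Rightarrow> complex"
  assumes hol: "h holomorphic_on S" and S: "{z. \<sigma> \<le> Re z} \<subseteq> S"
    and decay: "\<And>e. e > 0 \<Longrightarrow> \<exists>R. \<forall>z. \<sigma> \<le> Re z \<longrightarrow> R \<le> cmod z \<longrightarrow> norm (h z) < e"
    and z0: "\<sigma> < Re z0" "h z0 \<noteq> 0"
  shows "\<exists>t. norm (h z0) < norm (h (Complex \<sigma> t))"
proof (rule ccontr)
  define B where "B = norm (h z0)"
  have B: "B > 0" using z0(2) by (simp add: B_def)
  assume "\<not> ?thesis"
  then have line: "norm (h (Complex \<sigma> t)) \<le> B" for t by (simp add: B_def not_less)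
  obtain R0 where R0: "\<And>z. \<sigma> \<le> Re z \<Longrightarrow> R0 \<le> cmod z \<Longrightarrow> norm (h z) < B / 2"
    using decay[of "B / 2"] B by auto
  define R where "R = \<bar>R0\<bar> + cmod z0 + \<bar>\<sigma>\<bar> + 1"
  have R: "R0 + 1 \<le> R" "cmod z0 < R" "\<bar>\<sigma>\<bar> + 1 \<le> R"
    unfolding R_def using abs_ge_self[of R0] norm_ge_zero[of z0] abs_ge_zero[of \<sigma>] by linarith+
  define U where "U = {z. \<sigma> < Re z} \<inter> ball 0 R"
  have open_U: "open U" unfolding U_def by (intro open_Int open_halfspace_Re_gt open_ball)
  have closure_U: "closure U \<subseteq> S"
    using S unfolding U_def by (intro order_trans[OF closure_minimal S])
      (auto intro: closed_halfspace_Re_ge)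
  have z0_U: "z0 \<in> U" using z0(1) R by (simp add: U_def)
  have "h holomorphic_on U"
    using hol closure_U closure_subset by (blast intro: holomorphic_on_subset)
  moreover have "continuous_on (closure U) h"
    using holomorphic_on_imp_continuous_on[OF hol] closure_U by (rule continuous_on_subset)
  moreover have "norm (h z) \<le> B" if "z \<in> frontier U" for z
  proof (cases "Re z = \<sigma>")
    case True
    then have "z = Complex \<sigma> (Im z)" by (simp add: complex_eq_iff)
    then show ?thesis using line[of "Im z"] by simp
  next
    case False
    then have "\<sigma> \<le> Re z \<and> cmod z = R"
      using that frontier_half_disc[of \<sigma> R] by (auto simp: U_def)
    then have "norm (h z) < B / 2" using R0[of z] R(1) by auto
    then show ?thesis using B by simp
  qed
  moreover have "bounded U" by (simp add: U_def bounded_Int)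
  ultimately have "norm (h z) \<le> norm (h z0)" if "z \<in> U" for z
    using maximum_modulus_frontier[of h U B z] that interior_open[OF open_U] by (simp add: B_def)
  then have "h constant_on U"
    using maximum_modulus_principle[of h U U z0] \<open>h holomorphic_on U\<close> open_U z0_U
      convex_connected[of U] convex_Int[OF convex_halfspace_Re_gt convex_ball]
    by (auto simp: U_def)
  then obtain c where c: "\<And>z. z \<in> U \<Longrightarrow> h z = c" unfolding constant_on_def by blast
  define r where "r = R - 1 / 2"
  have r: "\<sigma> < r" "R0 \<le> r" "0 \<le> r" "r < R"
    unfolding r_def using R abs_ge_self[of \<sigma>] abs_ge_zero[of \<sigma>] by linarith+
  then have z1_U: "complex_of_real r \<in> U" by (simp add: U_def)
  have "norm (h (complex_of_real r)) < B / 2" using r by (intro R0) auto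
  moreover have "h (complex_of_real r) = h z0" using c[OF z1_U] c[OF z0_U] by simp
  ultimately show False using B by (simp add: B_def)
qed

section \<open>Delay systems and the pseudospectral abscissa\<close>

locale delay_system =
  fixes m :: nat and A :: "nat \<Rightarrow> complex^'n^'n" and \<tau> w :: "nat \<Rightarrow> real"
  assumes tau0: "\<tau> 0 = 0" and tau_pos: "\<forall>i\<in>{1..m}. \<tau> i \<ge> 0" and w_pos: "\<forall>i\<in>{0..m}. w i > 0"
begin

abbreviation F :: "complex \<Rightarrow> complex^'n^'n" where "F \<equiv> Fm m A \<tau>"

lemma tau_nonneg: "i \<in> {0..m} \<Longrightarrow> \<tau> i \<ge> 0"
  using tau0 tau_pos by (cases "i = 0") auto

definition delay_matrix :: "complex \<Rightarrow> complex^'n^'n" where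
  "delay_matrix z = (\<Sum>i\<in>{0..m}. (\<chi> r c. exp (- z * complex_of_real (\<tau> i)) * A i $ r $ c))"

lemma F_eq: "F z = mat z - delay_matrix z"
  by (simp add: Fm_def delay_matrix_def mat_def)

lemma delay_matrix_vector:
  "delay_matrix z *v x = (\<Sum>i\<in>{0..m}. exp (- z * complex_of_real (\<tau> i)) *s (A i *v x))"
proof -
  have "(delay_matrix z *v x) $ r = (\<Sum>i\<in>{0..m}. exp (- z * complex_of_real (\<tau> i)) *s (A i *v x)) $ r" for r
  proof -
    have "(delay_matrix z *v x) $ r
        = (\<Sum>c\<in>UNIV. (\<Sum>i\<in>{0..m}. exp (- z * complex_of_real (\<tau> i)) * A i $ r $ c) * x $ c)"
      by (simp add: delay_matrix_def matrix_vector_mult_def)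
    also have "\<dots> = (\<Sum>i\<in>{0..m}. \<Sum>c\<in>UNIV. exp (- z * complex_of_real (\<tau> i)) * (A i $ r $ c * x $ c))"
      by (subst sum.swap) (simp add: sum_distrib_right mult.assoc)
    finally show ?thesis by (simp add: matrix_vector_mult_def sum_distrib_left)
  qed
  then show ?thesis by (simp add: vec_eq_iff)
qed

definition delay_bound :: "real \<Rightarrow> real" where
  "delay_bound c = (\<Sum>i\<in>{0..m}. exp (- c * \<tau> i) * entry_norm_sum (A i))"

lemma norm_delay_matrix_vector_le:
  assumes "c \<le> Re z"
  shows "norm (delay_matrix z *v x) \<le> delay_bound c * norm x"
proof -
  have "norm (delay_matrix z *v x) \<le> (\<Sum>i\<in>{0..m}. norm (exp (- z * complex_of_real (\<tau> i)) *s (A i *v x)))"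
    unfolding delay_matrix_vector by (rule norm_sum)
  also have "\<dots> \<le> (\<Sum>i\<in>{0..m}. exp (- c * \<tau> i) * entry_norm_sum (A i) * norm x)"
  proof (intro sum_mono)
    fix i assume i: "i \<in> {0..m}"
    have "norm (exp (- z * complex_of_real (\<tau> i)) *s (A i *v x)) = exp (- Re z * \<tau> i) * norm (A i *v x)"
      by (simp add: norm_vec_def L2_set_def norm_mult power_mult_distrib sum_distrib_left[symmetric]
          real_sqrt_mult)
    also have "\<dots> \<le> exp (- c * \<tau> i) * (entry_norm_sum (A i) * norm x)"
      using tau_nonneg[OF i] assms
      by (intro mult_mono norm_matrix_vector_le_entry_norm_sum) (auto simp: mult_right_mono)
    finally show "norm (exp (- z * complex_of_real (\<tau> i)) *s (A i *v x))
        \<le> exp (- c * \<tau> i) * entry_norm_sum (A i) * norm x"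
      by (simp add: mult.assoc)
  qed
  also have "\<dots> = delay_bound c * norm x" by (simp add: delay_bound_def sum_distrib_right)
  finally show ?thesis .
qed

lemma norm_F_vector_ge:
  assumes "c \<le> Re z"
  shows "(cmod z - delay_bound c) * norm x \<le> norm (F z *v x)"
proof -
  have "norm (z *s x) = cmod z * norm x"
    by (simp add: norm_vec_def L2_set_def norm_mult power_mult_distrib sum_distrib_left[symmetric]
        real_sqrt_mult)
  moreover have "F z *v x = z *s x - delay_matrix z *v x"
    by (simp add: F_eq matrix_vector_mult_diff_rdistrib matrix_vector_mult_mat)
  ultimately have "cmod z * norm x \<le> norm (F z *v x) + norm (delay_matrix z *v x)"
    by (metis norm_triangle_ineq2 diff_le_eq)
  then show ?thesis using norm_delay_matrix_vector_le[OF assms, of x] by (simp add: left_diff_distrib)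
qed

lemma det_F_nz_if_large:
  assumes "c \<le> Re z" "delay_bound c < cmod z"
  shows "det (F z) \<noteq> 0"
  by (rule det_nz_if_norm_matrix_vector_ge[of "cmod z - delay_bound c"])
    (use norm_F_vector_ge[OF assms(1)] assms(2) in auto)

lemma sigma_max_inv_F_le:
  assumes "c \<le> Re z" "delay_bound c < cmod z"
  shows "sigma_max (matrix_inv (F z)) \<le> 1 / (cmod z - delay_bound c)"
  by (rule sigma_max_matrix_inv_le[of "cmod z - delay_bound c"])
    (use norm_F_vector_ge[OF assms(1)] assms(2) in auto)

lemma norm_delay_matrix_entry_le: "c \<le> Re z \<Longrightarrow> norm (delay_matrix z $ i $ j) \<le> delay_bound c"
  using Finite_Cartesian_Product.norm_nth_le[of "delay_matrix z *v axis j 1" i]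
    norm_delay_matrix_vector_le[of c z "axis j 1"]
  by (simp add: matrix_vector_mult_axis norm_axis_1_complex)

lemma holomorphic_on_F_entry: "(\<lambda>z. F z $ i $ j) holomorphic_on S"
  by (cases "i = j") (auto simp: Fm_def intro!: holomorphic_intros)

lemma holomorphic_on_det_F: "(\<lambda>z. det (F z)) holomorphic_on S"
  by (rule holomorphic_on_det) (rule holomorphic_on_F_entry)

lemma continuous_on_det_F: "continuous_on S (\<lambda>z. det (F z))"
  by (rule holomorphic_on_imp_continuous_on[OF holomorphic_on_det_F])

lemma F_entries_exponential_type:
  obtains C T where "C > 0" "\<And>z i j. norm (F z $ i $ j) \<le> C * exp (T * cmod z)"
proof -
  define N where "N = (\<Sum>k\<in>{0..m}. entry_norm_sum (A k))"
  define T where "T = 1 + (\<Sum>k\<in>{0..m}. \<tau> k)"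
  have N: "N \<ge> 0" by (simp add: N_def sum_nonneg entry_norm_sum_nonneg)
  have "(\<Sum>k\<in>{0..m}. \<tau> k) \<ge> 0" using tau_nonneg by (intro sum_nonneg) auto
  then have T: "T \<ge> 1" by (simp add: T_def)
  have exp_le: "norm (exp (- z * complex_of_real (\<tau> k))) \<le> exp (T * cmod z)" if k: "k \<in> {0..m}" for z k
  proof -
    have "\<tau> k \<le> (\<Sum>k\<in>{0..m}. \<tau> k)" using k tau_nonneg by (intro member_le_sum) auto
    then have "\<tau> k \<le> T" by (simp add: T_def)
    have "- Re z * \<tau> k \<le> cmod z * \<tau> k"
      using tau_nonneg[OF k] abs_Re_le_cmod[of z] by (intro mult_right_mono) auto
    also have "\<dots> \<le> T * cmod z"
      using mult_left_mono[OF \<open>\<tau> k \<le> T\<close> norm_ge_zero[of z]] by (simp add: mult.commute)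
    finally show ?thesis by simp
  qed
  have "norm (F z $ i $ j) \<le> (1 + N) * exp (T * cmod z)" for z i j
  proof -
    have "norm (F z $ i $ j) \<le> cmod z + (\<Sum>k\<in>{0..m}. norm (exp (- z * complex_of_real (\<tau> k))) * norm (A k $ i $ j))"
      unfolding Fm_def
      by (auto intro!: order_trans[OF norm_triangle_ineq4] order_trans[OF norm_sum] simp: norm_mult)
    also have "\<dots> \<le> exp (T * cmod z) + (\<Sum>k\<in>{0..m}. exp (T * cmod z) * entry_norm_sum (A k))"
    proof (intro add_mono sum_mono mult_mono exp_le norm_entry_le_entry_norm_sum)
      have "cmod z \<le> exp (cmod z)" using exp_ge_add_one_self[of "cmod z"] by linarith
      also have "\<dots> \<le> exp (T * cmod z)"
        using mult_right_mono[OF T norm_ge_zero[of z]] by simp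
      finally show "cmod z \<le> exp (T * cmod z)" .
    qed auto
    finally show ?thesis by (simp add: N_def sum_distrib_left algebra_simps)
  qed
  then show ?thesis using that[of "1 + N" T] N by simp
qed

lemma det_F_exponential_type:
  obtains a0 a1 where "\<And>z. norm (det (F z)) \<le> exp (a0 + a1 * cmod z)"
proof -
  obtain C T where C: "C > 0" and entry: "\<And>z i j. norm (F z $ i $ j) \<le> C * exp (T * cmod z)"
    using F_entries_exponential_type by blast
  define n where "n = CARD('n)"
  have "norm (det (F z)) \<le> exp (ln (fact n * C ^ n) + real n * T * cmod z)" for z
  proof -
    have "norm (det (F z)) \<le> fact n * (C * exp (T * cmod z)) ^ n"
      unfolding n_def by (intro norm_det_le entry)
    also have "\<dots> = exp (ln (fact n * C ^ n) + real n * T * cmod z)"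
      using C by (simp add: exp_add power_mult_distrib exp_of_nat_mult[symmetric] mult.assoc)
    finally show ?thesis .
  qed
  then show ?thesis using that by (metis mult.assoc)
qed

text \<open>On the positive real axis \<open>F x = x (I - D(x)/x)\<close> with \<open>D\<close> bounded, so \<open>det F\<close> grows
  exactly like \<open>x^n\<close>.\<close>
lemma det_F_over_power_tendsto:
  "((\<lambda>x::real. det (F (complex_of_real x)) / complex_of_real x ^ CARD('n)) \<longlongrightarrow> 1) at_top"
proof -
  define R where "R x = (\<chi> i j. delay_matrix (complex_of_real x) $ i $ j / complex_of_real x)" for x
  have "(R \<longlongrightarrow> 0) at_top"
  proof (rule Lim_null_comparison)
    show "\<forall>\<^sub>F x in at_top. norm (R x) \<le> real (CARD('n) * CARD('n)) * delay_bound 0 * (1 / x)"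
      using eventually_gt_at_top[of 0]
    proof eventually_elim
      case (elim x)
      have "norm (R x) \<le> entry_norm_sum (R x)" by (rule norm_le_entry_norm_sum)
      also have "\<dots> \<le> (\<Sum>i\<in>(UNIV::'n set). \<Sum>j\<in>(UNIV::'n set). delay_bound 0 / x)"
        unfolding entry_norm_sum_def R_def using elim
        by (intro sum_mono) (simp add: norm_divide divide_right_mono norm_delay_matrix_entry_le)
      finally show ?case by simp
    qed
    show "((\<lambda>x. real (CARD('n) * CARD('n)) * delay_bound 0 * (1 / x)) \<longlongrightarrow> 0) at_top"
      by (intro tendsto_mult_right_zero tendsto_divide_0[OF tendsto_const]
          filterlim_at_top_imp_at_infinity filterlim_ident)
  qed
  then have "((\<lambda>x. det (mat 1 - R x)) \<longlongrightarrow> det (mat 1 - 0 :: complex^'n^'n)) at_top"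
    by (intro tendsto_det tendsto_diff tendsto_const)
  moreover have "\<forall>\<^sub>F x in at_top. det (mat 1 - R x) = det (F (complex_of_real x)) / complex_of_real x ^ CARD('n)"
    using eventually_gt_at_top[of 0]
  proof eventually_elim
    case (elim x)
    have "F (complex_of_real x) = mat (complex_of_real x) ** (mat 1 - R x)"
      unfolding mat_matrix_mult using elim by (simp add: vec_eq_iff F_eq R_def mat_def right_diff_distrib)
    then have "det (F (complex_of_real x)) = complex_of_real x ^ CARD('n) * det (mat 1 - R x)"
      by (simp add: det_mul det_diagonal mat_def)
    then show ?case using elim by simp
  qed
  ultimately show ?thesis by (simp add: tendsto_cong)
qed

lemma char_roots_exist: "\<exists>z. det (F z) = 0"
proof (rule ccontr)
  assume nz: "\<nexists>z. det (F z) = 0"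
  obtain a0 a1 where "\<And>z. norm (det (F z)) \<le> exp (a0 + a1 * cmod z)"
    using det_F_exponential_type by blast
  then obtain a b where ab: "\<And>z. det (F z) = exp (a * z + b)"
    using zero_free_entire_exp_type[OF holomorphic_on_det_F] nz by blast
  have "((\<lambda>x::real. norm (det (F (complex_of_real x)) / complex_of_real x ^ CARD('n))) \<longlongrightarrow> norm (1::complex)) at_top"
    by (intro tendsto_norm det_F_over_power_tendsto)
  moreover have "\<forall>\<^sub>F x in at_top. norm (det (F (complex_of_real x)) / complex_of_real x ^ CARD('n))
      = exp (Re a * x + Re b) / x ^ CARD('n)"
    using eventually_gt_at_top[of 0] by eventually_elim (simp add: ab norm_divide norm_power)
  ultimately have "((\<lambda>x::real. exp (Re a * x + Re b) / x ^ CARD('n)) \<longlongrightarrow> 1) at_top"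
    by (simp add: tendsto_cong)
  then show False
    using exp_affine_over_power_not_tendsto[of "CARD('n)" 1] by (simp add: Suc_le_eq)
qed

abbreviation \<alpha>0 :: real where "\<alpha>0 \<equiv> alpha0 m A \<tau>"

lemma alpha0_attained: "\<exists>z0. det (F z0) = 0 \<and> Re z0 = \<alpha>0 \<and> (\<forall>z. det (F z) = 0 \<longrightarrow> Re z \<le> \<alpha>0)"
proof -
  obtain z1 where z1: "det (F z1) = 0" using char_roots_exist by blast
  define S where "S = {z. det (F z) = 0} \<inter> {z. Re z1 \<le> Re z}"
  have "S \<subseteq> cball 0 (delay_bound (Re z1))"
    using det_F_nz_if_large by (force simp: S_def)
  moreover have "closed S" unfolding S_def
    by (intro closed_Int closed_Collect_eq continuous_on_det_F continuous_on_const closed_halfspace_Re_ge)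
  ultimately have "compact S" by (meson bounded_cball bounded_subset compact_eq_bounded_closed)
  moreover have "S \<noteq> {}" using z1 by (auto simp: S_def)
  ultimately obtain z0 where z0: "z0 \<in> S" "\<And>z. z \<in> S \<Longrightarrow> Re z \<le> Re z0"
    using continuous_attains_sup[of S Re] continuous_on_Re continuous_on_id by blast
  have max: "Re z \<le> Re z0" if "det (F z) = 0" for z
    using z0 that by (cases "Re z1 \<le> Re z") (auto simp: S_def)
  have "\<alpha>0 = Re z0"
    unfolding alpha0_def by (rule cSup_eq_maximum) (use z0(1) max in \<open>auto simp: S_def\<close>)
  then show ?thesis using z0(1) max by (auto simp: S_def)
qed

lemma det_F_nz_right_of_alpha0: "\<alpha>0 < Re z \<Longrightarrow> det (F z) \<noteq> 0"
  using alpha0_attained by force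

abbreviation W :: "complex \<Rightarrow> real" where "W \<equiv> wfun m \<tau> w"

lemma wfun_eq: "W z = (\<Sum>i\<in>{0..m}. exp (- Re z * \<tau> i) / w i)"
  by (simp add: wfun_def)

lemma wfun_ge: "1 / w 0 \<le> W z"
proof -
  have "exp (- Re z * \<tau> 0) / w 0 \<le> (\<Sum>i\<in>{0..m}. exp (- Re z * \<tau> i) / w i)"
    by (rule member_le_sum) (use w_pos in \<open>auto intro: divide_nonneg_pos less_imp_le\<close>)
  then show ?thesis by (simp add: wfun_eq tau0)
qed

lemma wfun_pos: "0 < W z"
  using wfun_ge[of z] w_pos by (metis atLeastAtMost_iff divide_pos_pos le0 less_le_trans zero_less_one)

lemma wfun_antimono: "Re z1 \<le> Re z2 \<Longrightarrow> W z2 \<le> W z1"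
  unfolding wfun_eq
  by (intro sum_mono divide_right_mono) (use w_pos tau_nonneg in \<open>auto intro: mult_right_mono less_imp_le\<close>)

lemma continuous_on_wfun: "continuous_on S W"
  unfolding wfun_eq by (intro continuous_intros) (use w_pos in force)

definition resolvent_set :: "complex set" where
  "resolvent_set = {z. det (F z) \<noteq> 0}"

lemma holomorphic_on_inv_F_vector: "(\<lambda>z. (matrix_inv (F z) *v b) $ j) holomorphic_on resolvent_set"
proof (rule holomorphic_transform)
  show "(\<lambda>z. det (\<chi> i l. if l = j then b $ i else F z $ i $ l) / det (F z)) holomorphic_on resolvent_set"
  proof (intro holomorphic_on_divide holomorphic_on_det_F holomorphic_on_det)
    fix i l show "(\<lambda>z. (\<chi> i l. if l = j then b $ i else F z $ i $ l) $ i $ l) holomorphic_on resolvent_set"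
      by (cases "l = j") (auto intro: holomorphic_on_F_entry)
  qed (simp add: resolvent_set_def)
qed (simp add: resolvent_set_def matrix_inv_vector_cramer)

lemma continuous_on_inv_F: "continuous_on resolvent_set (\<lambda>z. matrix_inv (F z))"
proof -
  have "continuous_on resolvent_set (\<lambda>z. \<chi> j k. (matrix_inv (F z) *v axis k 1) $ j)"
    by (intro continuous_on_vec_lambda holomorphic_on_imp_continuous_on holomorphic_on_inv_F_vector)
  then show ?thesis by (simp add: matrix_vector_mult_axis)
qed

abbreviation f :: "complex \<Rightarrow> real" where "f \<equiv> ffun m A \<tau> w"

lemma continuous_on_f: "continuous_on resolvent_set f"
  unfolding ffun_def
  by (intro continuous_intros continuous_on_wfun continuous_on_compose2[OF continuous_on_sigma_max
        continuous_on_inv_F]) auto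

lemma f_pos: "det (F z) \<noteq> 0 \<Longrightarrow> 0 < f z"
  by (simp add: ffun_def wfun_pos sigma_max_matrix_inv_pos)

lemma f_decay_bound:
  assumes "c \<le> Re z" "delay_bound c < cmod z"
  shows "f z \<le> W (complex_of_real c) / (cmod z - delay_bound c)"
proof -
  have "f z \<le> W (complex_of_real c) * (1 / (cmod z - delay_bound c))"
    unfolding ffun_def using assms wfun_pos[of "complex_of_real c"]
    by (intro mult_mono wfun_antimono sigma_max_inv_F_le sigma_max_nonneg) auto
  then show ?thesis by simp
qed

lemma sigma_max_inv_F_vanishes:
  assumes "e > 0"
  shows "\<exists>R. \<forall>z. c \<le> Re z \<longrightarrow> R \<le> cmod z \<longrightarrow> sigma_max (matrix_inv (F z)) < e"
proof (intro exI allI impI)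
  fix z assume z: "c \<le> Re z" "delay_bound c + 2 / e \<le> cmod z"
  have "2 / e > 0" using assms by simp
  have "delay_bound c < delay_bound c + 2 / e" using assms by simp
  then have pos: "delay_bound c < cmod z" using z(2) by (rule less_le_trans)
  have "sigma_max (matrix_inv (F z)) \<le> 1 / (cmod z - delay_bound c)"
    by (rule sigma_max_inv_F_le[OF z(1) pos])
  also have "\<dots> \<le> 1 / (2 / e)"
  proof (rule divide_left_mono)
    show "2 / e \<le> cmod z - delay_bound c" using z(2) by simp
    show "0 < (cmod z - delay_bound c) * (2 / e)" using pos \<open>2 / e > 0\<close> by simp
  qed simp
  also have "\<dots> < e" using assms by simp
  finally show "sigma_max (matrix_inv (F z)) < e" .
qed

abbreviation \<alpha>f :: "real \<Rightarrow> real" where "\<alpha>f \<equiv> alpha_f m A \<tau> w"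

lemma alpha_f_attained:
  assumes "\<alpha>0 < \<sigma>"
  obtains \<omega>0 where "\<And>\<omega>. f (Complex \<sigma> \<omega>) \<le> f (Complex \<sigma> \<omega>0)" "\<alpha>f \<sigma> = f (Complex \<sigma> \<omega>0)"
proof -
  define g where "g \<omega> = f (Complex \<sigma> \<omega>)" for \<omega>
  have in_res: "Complex \<sigma> \<omega> \<in> resolvent_set" for \<omega>
    using det_F_nz_right_of_alpha0 assms by (simp add: resolvent_set_def)
  have "continuous_on UNIV (\<lambda>\<omega>. Complex \<sigma> \<omega>)"
    by (simp add: Complex_eq continuous_intros)
  then have "continuous_on UNIV g"
    unfolding g_def by (rule continuous_on_compose2[OF continuous_on_f]) (auto simp: in_res)
  moreover have "g \<omega> < g 0" if "delay_bound \<sigma> + W \<sigma> / g 0 + 1 < \<bar>\<omega>\<bar>" for \<omega>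
  proof -
    have g0: "g 0 > 0" using in_res[of 0] by (simp add: g_def resolvent_set_def f_pos)
    have "\<bar>\<omega>\<bar> \<le> cmod (Complex \<sigma> \<omega>)" using abs_Im_le_cmod[of "Complex \<sigma> \<omega>"] by simp
    then have large: "W \<sigma> / g 0 + 1 < cmod (Complex \<sigma> \<omega>) - delay_bound \<sigma>" using that by simp
    have "W \<sigma> / g 0 > 0" using wfun_pos g0 by simp
    then have "delay_bound \<sigma> < cmod (Complex \<sigma> \<omega>)" using large by linarith
    then have "g \<omega> \<le> W \<sigma> / (cmod (Complex \<sigma> \<omega>) - delay_bound \<sigma>)"
      unfolding g_def by (intro f_decay_bound) auto
    also have "\<dots> < W \<sigma> / (W \<sigma> / g 0)"
      using large \<open>W \<sigma> / g 0 > 0\<close> wfun_pos by (intro divide_strict_left_mono mult_pos_pos) auto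
    also have "\<dots> = g 0" using wfun_pos[of \<sigma>] by simp
    finally show ?thesis .
  qed
  ultimately obtain \<omega>0 where max: "\<And>\<omega>. g \<omega> \<le> g \<omega>0"
    using continuous_attains_sup_if_less_outside by blast
  have "\<alpha>f \<sigma> = g \<omega>0"
    unfolding alpha_f_def g_def[symmetric] by (rule cSup_eq_maximum) (use max in auto)
  then show ?thesis
    by (intro that[of \<omega>0]) (use max in \<open>simp_all add: g_def\<close>)
qed

lemma f_le_alpha_f: "\<alpha>0 < \<sigma> \<Longrightarrow> f (Complex \<sigma> \<omega>) \<le> \<alpha>f \<sigma>"
  by (metis alpha_f_attained)

lemma alpha_f_strict_decreasing:
  assumes \<sigma>1: "\<alpha>0 < \<sigma>1" and \<sigma>12: "\<sigma>1 < \<sigma>2"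
  shows "\<alpha>f \<sigma>2 < \<alpha>f \<sigma>1"
proof -
  have res: "{z. \<sigma>1 \<le> Re z} \<subseteq> resolvent_set"
    using \<sigma>1 det_F_nz_right_of_alpha0 by (auto simp: resolvent_set_def)
  obtain \<omega>2 where \<omega>2: "\<alpha>f \<sigma>2 = f (Complex \<sigma>2 \<omega>2)"
    using alpha_f_attained[of \<sigma>2] \<sigma>1 \<sigma>12 by auto
  define l2 where "l2 = Complex \<sigma>2 \<omega>2"
  define s where "s = sigma_max (matrix_inv (F l2))"
  have l2_res: "det (F l2) \<noteq> 0" using \<sigma>1 \<sigma>12 by (intro det_F_nz_right_of_alpha0) (simp add: l2_def)
  have s_pos: "s > 0" unfolding s_def by (rule sigma_max_matrix_inv_pos[OF l2_res])
  obtain u where u: "norm u = 1" "norm (matrix_inv (F l2) *v u) = s"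
    unfolding s_def by (rule sigma_max_maximizer)
  define v where "v = (1 / s) *\<^sub>R (matrix_inv (F l2) *v u)"
  have v: "norm v = 1" "matrix_inv (F l2) *v u = s *\<^sub>R v"
    using u s_pos by (simp_all add: v_def)
  define g where "g z = cinner v (matrix_inv (F z) *v u)" for z
  have g_le: "norm (g z) \<le> sigma_max (matrix_inv (F z))" for z
    using norm_cinner_le[of v "matrix_inv (F z) *v u"] u(1) v(1)
      norm_matrix_vector_le_sigma_max[of "matrix_inv (F z)" u]
    by (simp add: g_def)
  have g_l2: "g l2 = complex_of_real s"
    using v by (simp add: g_def cinner_scaleR_right cinner_self)
  have "g holomorphic_on resolvent_set"
    unfolding g_def cinner_def by (intro holomorphic_intros holomorphic_on_inv_F_vector)
  moreover have "\<exists>R. \<forall>z. \<sigma>1 \<le> Re z \<longrightarrow> R \<le> cmod z \<longrightarrow> norm (g z) < e" if "e > 0" for e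
    using sigma_max_inv_F_vanishes[OF that, of \<sigma>1] g_le by (meson le_less_trans)
  ultimately obtain t where t: "s < norm (g (Complex \<sigma>1 t))"
    using half_plane_maximum_modulus_strict[OF _ res, of g l2] \<sigma>12 g_l2 s_pos
    by (auto simp: l2_def)
  define z1 where "z1 = Complex \<sigma>1 t"
  have "\<alpha>f \<sigma>2 = W l2 * s" by (simp add: \<omega>2 ffun_def l2_def s_def)
  also have "\<dots> \<le> W z1 * s"
    using s_pos \<sigma>12 by (intro mult_right_mono wfun_antimono) (auto simp: l2_def z1_def)
  also have "\<dots> < W z1 * norm (g z1)" using t wfun_pos by (simp add: z1_def)
  also have "\<dots> \<le> W z1 * sigma_max (matrix_inv (F z1))"
    using g_le wfun_pos by (intro mult_left_mono) (auto intro: less_imp_le)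
  also have "\<dots> = f z1" by (simp add: ffun_def)
  also have "\<dots> \<le> \<alpha>f \<sigma>1" unfolding z1_def by (rule f_le_alpha_f[OF \<sigma>1])
  finally show ?thesis .
qed

text \<open>Near a rightmost root \<open>det F\<close> is small, so the resolvent is large, while the weight stays
  above \<open>1 / w 0\<close> because \<open>\<tau> 0 = 0\<close>.\<close>
lemma exists_f_ge_right_of_alpha0:
  assumes T: "T > 0"
  shows "\<exists>z. \<alpha>0 < Re z \<and> T \<le> f z"
proof -
  obtain z0 where z0: "det (F z0) = 0" "Re z0 = \<alpha>0" using alpha0_attained by blast
  define B where "B = T * w 0"
  have B: "B > 0" using T w_pos by (simp add: B_def)
  define \<eta> where "\<eta> = 1 / (fact CARD('n) * B ^ CARD('n))"
  have \<eta>: "\<eta> > 0" using B by (simp add: \<eta>_def)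
  obtain d where d: "d > 0" "\<And>z. dist z z0 < d \<Longrightarrow> dist (det (F z)) (det (F z0)) < \<eta>"
    using continuous_on_det_F[of UNIV] \<eta> unfolding continuous_on_iff by blast
  define z1 where "z1 = z0 + complex_of_real (d / 2)"
  have small: "norm (det (F z1)) < \<eta>" using d z0(1) by (simp add: z1_def dist_norm)
  have right: "\<alpha>0 < Re z1" using z0(2) d(1) by (simp add: z1_def)
  have nz: "det (F z1) \<noteq> 0" by (rule det_F_nz_right_of_alpha0[OF right])
  have "B \<le> sigma_max (matrix_inv (F z1))"
  proof (rule ccontr)
    assume "\<not> ?thesis"
    then have "fact CARD('n) * sigma_max (matrix_inv (F z1)) ^ CARD('n) \<le> fact CARD('n) * B ^ CARD('n)"
      using sigma_max_nonneg by (intro mult_left_mono power_mono) auto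
    then have "1 \<le> norm (det (F z1)) * (fact CARD('n) * B ^ CARD('n))"
      using norm_det_sigma_max_matrix_inv_ge_1[OF nz] by (meson mult_left_mono norm_ge_zero order_trans)
    also have "\<dots> < \<eta> * (fact CARD('n) * B ^ CARD('n))"
      using small B by (intro mult_strict_right_mono) auto
    also have "\<dots> = 1" using B by (simp add: \<eta>_def)
    finally show False by simp
  qed
  then have "T \<le> 1 / w 0 * sigma_max (matrix_inv (F z1))"
    using w_pos by (simp add: B_def field_simps)
  also have "\<dots> \<le> f z1"
    unfolding ffun_def using wfun_ge sigma_max_nonneg by (intro mult_right_mono) auto
  finally show ?thesis using right by blast
qed

lemma compact_f_superlevel:
  assumes "\<alpha>0 < c" "T > 0"
  shows "compact {z. c \<le> Re z \<and> T \<le> f z}"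
proof -
  define H where "H = {z. c \<le> Re z}"
  have "H \<subseteq> resolvent_set"
    using assms(1) det_F_nz_right_of_alpha0 by (auto simp: H_def resolvent_set_def)
  then have "closed (H \<inter> f -` {T..})"
    by (intro continuous_closed_preimage continuous_on_subset[OF continuous_on_f])
      (auto simp: H_def closed_halfspace_Re_ge)
  moreover have "H \<inter> f -` {T..} \<subseteq> cball 0 (delay_bound c + W c / T)"
  proof (clarsimp simp: H_def)
    fix z assume z: "c \<le> Re z" "T \<le> f z"
    show "cmod z \<le> delay_bound c + W c / T"
    proof (rule ccontr)
      assume "\<not> ?thesis"
      then have large: "W c / T < cmod z - delay_bound c" by simp
      have "W c / T > 0" using wfun_pos assms(2) by simp
      then have "f z \<le> W c / (cmod z - delay_bound c)"
        using large by (intro f_decay_bound z(1)) auto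
      also have "\<dots> < W c / (W c / T)"
        using large \<open>W c / T > 0\<close> wfun_pos by (intro divide_strict_left_mono mult_pos_pos) auto
      also have "\<dots> = T" using wfun_pos[of c] by simp
      finally show False using z(2) by simp
    qed
  qed
  ultimately have "compact (H \<inter> f -` {T..})"
    by (meson bounded_cball bounded_subset compact_eq_bounded_closed)
  moreover have "H \<inter> f -` {T..} = {z. c \<le> Re z \<and> T \<le> f z}" by (auto simp: H_def)
  ultimately show ?thesis by simp
qed

text \<open>The level \<open>T\<close> is reached at the largest real part \<open>\<sigma>\<close> of a point where \<open>f \<ge> T\<close>: there
  \<open>\<alpha>\<^sub>f(\<sigma>) \<ge> T\<close>, and \<open>\<alpha>\<^sub>f(\<sigma>) > T\<close> would give, by continuity, such a point further right.\<close>
lemma alpha_f_attains_level: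
  assumes T: "T > 0"
  shows "\<exists>\<sigma>. \<alpha>0 < \<sigma> \<and> \<alpha>f \<sigma> = T"
proof -
  obtain z1 where z1: "\<alpha>0 < Re z1" "T \<le> f z1" using exists_f_ge_right_of_alpha0[OF T] by blast
  define Q where "Q = {z. Re z1 \<le> Re z \<and> T \<le> f z}"
  have "compact Q" unfolding Q_def by (rule compact_f_superlevel[OF z1(1) T])
  moreover have "z1 \<in> Q" using z1 by (simp add: Q_def)
  ultimately obtain zs where zs: "zs \<in> Q" "\<And>z. z \<in> Q \<Longrightarrow> Re z \<le> Re zs"
    using continuous_attains_sup[of Q Re] continuous_on_Re continuous_on_id by blast
  define \<sigma> where "\<sigma> = Re zs"
  have \<sigma>: "\<alpha>0 < \<sigma>" using zs(1) z1(1) by (simp add: Q_def \<sigma>_def)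
  have "T \<le> \<alpha>f \<sigma>"
    using zs(1) f_le_alpha_f[OF \<sigma>, of "Im zs"] by (simp add: Q_def \<sigma>_def)
  moreover have "\<not> T < \<alpha>f \<sigma>"
  proof
    assume "T < \<alpha>f \<sigma>"
    then obtain \<omega>0 where gt: "T < f (Complex \<sigma> \<omega>0)" using alpha_f_attained[OF \<sigma>] by metis
    have "Complex \<sigma> \<omega>0 \<in> resolvent_set"
      using \<sigma> det_F_nz_right_of_alpha0 by (simp add: resolvent_set_def)
    then obtain d where d: "d > 0"
      "\<And>y. y \<in> resolvent_set \<Longrightarrow> dist y (Complex \<sigma> \<omega>0) < d \<Longrightarrow> dist (f y) (f (Complex \<sigma> \<omega>0)) < f (Complex \<sigma> \<omega>0) - T"
      using continuous_on_f gt unfolding continuous_on_iff by (metis diff_gt_0_iff_gt)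
    define y where "y = Complex (\<sigma> + d / 2) \<omega>0"
    have "y \<in> resolvent_set" using \<sigma> d(1) det_F_nz_right_of_alpha0 by (simp add: y_def resolvent_set_def)
    moreover have "dist y (Complex \<sigma> \<omega>0) < d" using d(1) by (simp add: y_def dist_norm cmod_def)
    ultimately have "T < f y" using d(2) by (force simp: dist_real_def abs_less_iff)
    then have "y \<in> Q" using zs(1) d(1) by (simp add: Q_def y_def \<sigma>_def)
    then show False using zs(2) d(1) by (fastforce simp: y_def \<sigma>_def)
  qed
  ultimately show ?thesis using \<sigma> by auto
qed

lemma alpha_eps_eq:
  assumes \<sigma>: "\<alpha>0 < \<sigma>" and level: "\<alpha>f \<sigma> = 1 / \<epsilon>"
  shows "alpha_eps m A \<tau> w \<epsilon> = \<sigma>"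
  unfolding alpha_eps_def
proof (rule cSup_eq_maximum)
  obtain \<omega>0 where "\<alpha>f \<sigma> = f (Complex \<sigma> \<omega>0)" using alpha_f_attained[OF \<sigma>] by metis
  then show "\<sigma> \<in> {Re z |z. det (F z) \<noteq> 0 \<and> f z = 1 / \<epsilon>}"
    using det_F_nz_right_of_alpha0[of "Complex \<sigma> \<omega>0"] \<sigma> level by force
next
  fix x assume "x \<in> {Re z |z. det (F z) \<noteq> 0 \<and> f z = 1 / \<epsilon>}"
  then obtain z where z: "x = Re z" "f z = 1 / \<epsilon>" by blast
  show "x \<le> \<sigma>"
  proof (rule ccontr)
    assume "\<not> x \<le> \<sigma>"
    then have "\<sigma> < Re z" using z(1) by simp
    then have "f z \<le> \<alpha>f (Re z)" using f_le_alpha_f[of "Re z" "Im z"] \<sigma> by simp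
    also have "\<dots> < \<alpha>f \<sigma>" by (rule alpha_f_strict_decreasing[OF \<sigma> \<open>\<sigma> < Re z\<close>])
    finally show False using z(2) level by simp
  qed
qed

end

theorem mainTheorem3:
  fixes m :: nat and A :: "nat \<Rightarrow> complex^'n^'n" and \<tau> w :: "nat \<Rightarrow> real" and \<epsilon> :: real
  assumes "\<tau> 0 = 0" and "\<forall>i\<in>{1..m}. \<tau> i \<ge> 0" and "\<forall>i\<in>{0..m}. w i > 0" and "\<epsilon> > 0"
  shows "(\<exists>!\<sigma>. alpha0 m A \<tau> < \<sigma> \<and> alpha_f m A \<tau> w \<sigma> = 1 / \<epsilon>) \<and>
         (\<forall>\<sigma>. alpha0 m A \<tau> < \<sigma> \<and> alpha_f m A \<tau> w \<sigma> = 1 / \<epsilon> \<longrightarrow> \<sigma> = alpha_eps m A \<tau> w \<epsilon>)"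
proof -
  interpret delay_system m A \<tau> w using assms(1-3) by unfold_locales
  obtain \<sigma> where \<sigma>: "\<alpha>0 < \<sigma>" "\<alpha>f \<sigma> = 1 / \<epsilon>"
    using alpha_f_attains_level[of "1 / \<epsilon>"] assms(4) by auto
  have unique: "\<sigma>' = \<sigma>" if "\<alpha>0 < \<sigma>'" "\<alpha>f \<sigma>' = 1 / \<epsilon>" for \<sigma>'
    using alpha_f_strict_decreasing[OF \<sigma>(1), of \<sigma>'] alpha_f_strict_decreasing[OF that(1), of \<sigma>] \<sigma> that
    by (cases \<sigma>' \<sigma> rule: linorder_cases) auto
  show ?thesis
    using \<sigma> unique alpha_eps_eq by blast
qed

end
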